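(* Let $\mathbb{K}=(K,+,\times,0,1)$ be a semiring. The following are equivalent: (1) $\mathbb{K}$ is additively absorptive and multiplicatively idempotent; (2) $\mathbb{K}$ is additively positive and the inner consistency property holds for $\mathbb{K}$-relations via the standard $\mathbb{K}$-join.
   Context: A semiring: $(K,+,0)$ and $(K,\times,1)$ commutative monoids, $\times$ distributes over $+$, $0\times p=0$. Additively positive: $p+q=0$ implies $p=q=0$. Additively absorptive: $p+p\times q=p$ for all $p,q$. Multiplicatively idempotent: $p\times p=p$ for all $p$. Attributes have domains (arbitrary sets); for a finite attribute set $X$, an $X$-tuple assigns each attribute a value in its domain; $t[Y]$ is restriction. A $\mathbb{K}$-relation over $X$ is a function $R$ from $X$-tuples to $K$ with finite support $R'$; marginals $R[Y](t)=\sum_{r\in R',r[Y]=t}R(r)$. $R(X),S(Y)$ are inner consistent if $R[X\cap Y]=S[X\cap Y]$. The standard $\mathbb{K}$-join of $R(X)$ and $S(Y)$ is the $\mathbb{K}$-relation $W$ over $X\cup Y$ with $W(t)=R(t[X])\times S(t[Y])$. The inner consistency property holds for $\mathbb{K}$-relations via the standard $\mathbb{K}$-join if for any two inner consistent $\mathbb{K}$-relations $R(X),S(Y)$, their standard $\mathbb{K}$-join $W$ satisfies $W[X]=R$ and $W[Y]=S$. *)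

theory Defs
  imports Main "HOL-Library.FuncSet" "HOL-Library.Infinite_Typeclass"
begin

definition add_positive :: "'k::{comm_semiring_0,comm_monoid_mult} itself \<Rightarrow> bool" where
  "add_positive _ \<longleftrightarrow> (\<forall>p q::'k. p + q = 0 \<longrightarrow> p = 0 \<and> q = 0)"

definition add_absorptive :: "'k::{comm_semiring_0,comm_monoid_mult} itself \<Rightarrow> bool" where
  "add_absorptive _ \<longleftrightarrow> (\<forall>p q::'k. p + p * q = p)"

definition mult_idempotent :: "'k::{comm_semiring_0,comm_monoid_mult} itself \<Rightarrow> bool" where
  "mult_idempotent _ \<longleftrightarrow> (\<forall>p::'k. p * p = p)"

definition tuples :: "('at \<Rightarrow> 'v set) \<Rightarrow> 'at set \<Rightarrow> ('at \<Rightarrow> 'v) set" where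
  "tuples Dom X = PiE X Dom"

definition krel :: "('at \<Rightarrow> 'v set) \<Rightarrow> 'at set \<Rightarrow> (('at \<Rightarrow> 'v) \<Rightarrow> 'k::zero) \<Rightarrow> bool" where
  "krel Dom X R \<longleftrightarrow> (\<forall>t. t \<notin> tuples Dom X \<longrightarrow> R t = 0) \<and> finite {t. R t \<noteq> 0}"

definition marginal :: "(('at \<Rightarrow> 'v) \<Rightarrow> 'k::comm_monoid_add) \<Rightarrow> 'at set \<Rightarrow> ('at \<Rightarrow> 'v) \<Rightarrow> 'k" where
  "marginal R Y t = (\<Sum>r\<in>{r. R r \<noteq> 0 \<and> restrict r Y = t}. R r)"

definition inner_consistent ::
  "'at set \<Rightarrow> (('at \<Rightarrow> 'v) \<Rightarrow> 'k::comm_monoid_add) \<Rightarrow> 'at set \<Rightarrow> (('at \<Rightarrow> 'v) \<Rightarrow> 'k) \<Rightarrow> bool" where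
  "inner_consistent X R Y S \<longleftrightarrow> marginal R (X \<inter> Y) = marginal S (Y \<inter> X)"

definition std_join ::
  "('at \<Rightarrow> 'v set) \<Rightarrow> 'at set \<Rightarrow> (('at \<Rightarrow> 'v) \<Rightarrow> 'k::{comm_semiring_0,comm_monoid_mult})
     \<Rightarrow> 'at set \<Rightarrow> (('at \<Rightarrow> 'v) \<Rightarrow> 'k) \<Rightarrow> ('at \<Rightarrow> 'v) \<Rightarrow> 'k" where
  "std_join Dom X R Y S t =
     (if t \<in> tuples Dom (X \<union> Y) then R (restrict t X) * S (restrict t Y) else 0)"

definition inner_consistency_property ::
  "'k::{comm_semiring_0,comm_monoid_mult} itself \<Rightarrow> 'at itself \<Rightarrow> 'v itself \<Rightarrow> bool" where
  "inner_consistency_property _ _ _ \<longleftrightarrow>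
     (\<forall>(Dom :: 'at \<Rightarrow> 'v set) (X :: 'at set) (Y :: 'at set)
        (R :: ('at \<Rightarrow> 'v) \<Rightarrow> 'k) (S :: ('at \<Rightarrow> 'v) \<Rightarrow> 'k).
        finite X \<and> finite Y \<and> krel Dom X R \<and> krel Dom Y S \<and> inner_consistent X R Y S \<longrightarrow>
        marginal (std_join Dom X R Y S) X = R \<and> marginal (std_join Dom X R Y S) Y = S)"

end

theory Submission
  imports Defs
begin

text \<open>Both conditions are equivalent to the law \<open>p * (p + q) = p\<close>.
  The marginal of the standard join of \<open>R(X)\<close> and \<open>S(Y)\<close> onto \<open>X\<close> is
  \<open>R(t) * S[X \<inter> Y](t[X \<inter> Y])\<close>; under inner consistency this is
  \<open>R(t) * (R(t) + q)\<close> for the mass \<open>q\<close> of the other tuples agreeing with \<open>t\<close>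
  on \<open>X \<inter> Y\<close>, which the law collapses to \<open>R(t)\<close>. Conversely, joining a
  relation \<open>S\<close> with the relation over no attributes that carries the total mass of
  \<open>S\<close> gives \<open>S(s) * \<Sum>S = S(s)\<close>; a relation over one attribute with two tuples of
  weights \<open>p\<close> and \<open>q\<close> then yields the law. Positivity also follows from the law,
  as \<open>p + q = 0\<close> gives \<open>p = p * (p + q) = 0\<close>.\<close>

lemma absorptive_idempotent_iff_mult_add_absorb:
  "add_absorptive TYPE('k::{comm_semiring_0,comm_monoid_mult}) \<and> mult_idempotent TYPE('k)
    \<longleftrightarrow> (\<forall>p q :: 'k. p * (p + q) = p)"
  unfolding add_absorptive_def mult_idempotent_def
  by (metis add.right_neutral distrib_left mult_zero_right)

lemma add_positive_if_mult_add_absorb: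
  assumes "\<And>p q :: 'k::{comm_semiring_0,comm_monoid_mult}. p * (p + q) = p"
  shows "add_positive TYPE('k)"
  unfolding add_positive_def by (metis assms add.commute mult_zero_right)

lemma bij_betw_restrict_extensions:
  assumes t: "t \<in> PiE X Dom"
  shows "bij_betw (\<lambda>r. restrict r Y)
           {r \<in> PiE (X \<union> Y) Dom. restrict r X = t \<and> P (restrict r Y)}
           {s \<in> PiE Y Dom. restrict s (Y \<inter> X) = restrict t (X \<inter> Y) \<and> P s}"
    (is "bij_betw _ ?A ?B")
proof -
  define glue where "glue s = (\<lambda>a. if a \<in> X then t a else s a)" for s :: "'a \<Rightarrow> 'b"
  have to_B: "glue (restrict r Y) = r \<and> restrict r Y \<in> ?B" if "r \<in> ?A" for r
  proof -
    have r: "r \<in> PiE (X \<union> Y) Dom" and "restrict r X = t" and "P (restrict r Y)"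
      using that by auto
    then have rt: "a \<in> X \<Longrightarrow> r a = t a" for a by (metis restrict_apply')
    have "glue (restrict r Y) = r"
      using rt PiE_arb[OF r] by (auto simp: glue_def fun_eq_iff)
    moreover have "restrict r Y \<in> PiE Y Dom"
      using r by (auto simp: PiE_iff)
    moreover have "restrict (restrict r Y) (Y \<inter> X) = restrict t (X \<inter> Y)"
      using rt by (auto simp: fun_eq_iff)
    ultimately show ?thesis using \<open>P (restrict r Y)\<close> by simp
  qed
  have to_A: "restrict (glue s) Y = s \<and> glue s \<in> ?A" if "s \<in> ?B" for s
  proof -
    have s: "s \<in> PiE Y Dom" and "restrict s (Y \<inter> X) = restrict t (X \<inter> Y)" and "P s"
      using that by auto
    then have st: "a \<in> X \<Longrightarrow> a \<in> Y \<Longrightarrow> s a = t a" for a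
      by (metis IntI Int_commute restrict_apply')
    have "restrict (glue s) Y = s"
      using st PiE_arb[OF s] by (auto simp: glue_def fun_eq_iff)
    moreover have "glue s \<in> PiE (X \<union> Y) Dom"
      using s t by (auto simp: glue_def PiE_iff extensional_def)
    moreover have "restrict (glue s) X = t"
      using PiE_arb[OF t] by (auto simp: glue_def fun_eq_iff)
    ultimately show ?thesis using \<open>P s\<close> by simp
  qed
  show ?thesis
    by (rule bij_betw_byWitness[where f' = glue]) (use to_A to_B in blast)+
qed

lemma marginal_std_join:
  fixes R S :: "('at \<Rightarrow> 'v) \<Rightarrow> 'k::{comm_semiring_0,comm_monoid_mult}"
  assumes R: "krel Dom X R" and S: "krel Dom Y S"
  shows "marginal (std_join Dom X R Y S) X t = R t * marginal S (Y \<inter> X) (restrict t (X \<inter> Y))"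
proof (cases "t \<in> PiE X Dom")
  case False
  then have "R t = 0"
    using R by (simp add: krel_def tuples_def)
  moreover have "{r. std_join Dom X R Y S r \<noteq> 0 \<and> restrict r X = t} = {}"
    using False by (auto simp: std_join_def tuples_def PiE_iff)
  ultimately show ?thesis
    unfolding marginal_def by (simp only: sum.empty mult_zero_left)
next
  case True
  define B where "B = {r \<in> PiE (X \<union> Y) Dom. restrict r X = t \<and> S (restrict r Y) \<noteq> 0}"
  define C where "C = {s \<in> PiE Y Dom. restrict s (Y \<inter> X) = restrict t (X \<inter> Y) \<and> S s \<noteq> 0}"
  have bij: "bij_betw (\<lambda>r. restrict r Y) B C"
    unfolding B_def C_def by (rule bij_betw_restrict_extensions[OF True])
  have C_eq: "C = {s. S s \<noteq> 0 \<and> restrict s (Y \<inter> X) = restrict t (X \<inter> Y)}"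
    using S by (auto simp: C_def krel_def tuples_def)
  have "finite C"
    using S unfolding C_eq krel_def by (auto intro: rev_finite_subset)
  then have "finite B"
    using bij bij_betw_finite by blast
  have "marginal (std_join Dom X R Y S) X t = sum (std_join Dom X R Y S) B"
    unfolding marginal_def using \<open>finite B\<close>
    by (intro sum.mono_neutral_left) (auto simp: B_def std_join_def tuples_def)
  also have "\<dots> = (\<Sum>r\<in>B. R t * S (restrict r Y))"
    by (rule sum.cong) (auto simp: B_def std_join_def tuples_def)
  also have "\<dots> = R t * (\<Sum>r\<in>B. S (restrict r Y))"
    by (simp add: sum_distrib_left)
  also have "(\<Sum>r\<in>B. S (restrict r Y)) = sum S C"
    using bij by (rule sum.reindex_bij_betw)
  also have "\<dots> = marginal S (Y \<inter> X) (restrict t (X \<inter> Y))"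
    by (simp add: marginal_def C_eq)
  finally show ?thesis .
qed

lemma std_join_commute: "std_join Dom Y S X R = std_join Dom X R Y S"
  by (auto simp: fun_eq_iff std_join_def Un_commute mult.commute)

lemma marginal_std_join_right:
  fixes R S :: "('at \<Rightarrow> 'v) \<Rightarrow> 'k::{comm_semiring_0,comm_monoid_mult}"
  assumes "krel Dom X R" and "krel Dom Y S"
  shows "marginal (std_join Dom X R Y S) Y s = S s * marginal R (X \<inter> Y) (restrict s (Y \<inter> X))"
  using marginal_std_join[OF assms(2,1)] by (simp add: std_join_commute)

lemma mult_marginal_absorb:
  fixes R :: "('at \<Rightarrow> 'v) \<Rightarrow> 'k::{comm_semiring_0,comm_monoid_mult}"
  assumes absorb: "\<And>p q :: 'k. p * (p + q) = p" and fin: "finite {r. R r \<noteq> 0}"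
  shows "R t * marginal R Z (restrict t Z) = R t"
proof (cases "R t = 0")
  case False
  let ?D = "{r. R r \<noteq> 0 \<and> restrict r Z = restrict t Z}"
  have "finite ?D"
    using fin by (rule rev_finite_subset) auto
  moreover have "t \<in> ?D"
    using False by simp
  ultimately have "marginal R Z (restrict t Z) = R t + sum R (?D - {t})"
    unfolding marginal_def by (rule sum.remove)
  then show ?thesis
    by (simp add: absorb)
qed simp

lemma inner_consistency_property_if_mult_add_absorb:
  assumes absorb: "\<And>p q :: 'k::{comm_semiring_0,comm_monoid_mult}. p * (p + q) = p"
  shows "inner_consistency_property TYPE('k) TYPE('at) TYPE('v)"
  unfolding inner_consistency_property_def
proof (intro allI impI; elim conjE)
  fix Dom :: "'at \<Rightarrow> 'v set" and X Y :: "'at set" and R S :: "('at \<Rightarrow> 'v) \<Rightarrow> 'k"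
  assume R: "krel Dom X R" and S: "krel Dom Y S" and "inner_consistent X R Y S"
  then have ic: "marginal R (X \<inter> Y) = marginal S (Y \<inter> X)"
    by (simp add: inner_consistent_def)
  have "marginal (std_join Dom X R Y S) X t = R t" for t
    using R by (simp add: marginal_std_join[OF R S] ic[symmetric] mult_marginal_absorb[OF absorb] krel_def)
  moreover have "marginal (std_join Dom X R Y S) Y s = S s" for s
    using S by (simp add: marginal_std_join_right[OF R S] ic mult_marginal_absorb[OF absorb] krel_def)
  ultimately show "marginal (std_join Dom X R Y S) X = R \<and> marginal (std_join Dom X R Y S) Y = S"
    by auto
qed

lemma marginal_empty:
  "marginal R {} t = (if t = (\<lambda>_. undefined) then (\<Sum>r | R r \<noteq> 0. R r) else 0)"
  by (simp add: marginal_def restrict_def)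

lemma mult_total_if_inner_consistency_property:
  fixes S :: "('at \<Rightarrow> 'v) \<Rightarrow> 'k::{comm_semiring_0,comm_monoid_mult}"
  assumes icp: "inner_consistency_property TYPE('k) TYPE('at) TYPE('v)"
    and "finite Y" and S: "krel Dom Y S"
  shows "S s * (\<Sum>r | S r \<noteq> 0. S r) = S s"
proof -
  define c where "c = (\<Sum>r | S r \<noteq> 0. S r)"
  define R :: "('at \<Rightarrow> 'v) \<Rightarrow> 'k" where "R r = (if r = (\<lambda>_. undefined) then c else 0)" for r
  have R: "krel Dom {} R"
    by (auto simp: krel_def tuples_def R_def intro: rev_finite_subset[of "{\<lambda>_. undefined}"])
  have "(\<Sum>r | R r \<noteq> 0. R r) = sum R {\<lambda>_. undefined}"
    by (intro sum.mono_neutral_left) (auto simp: R_def)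
  then have "marginal R {} = marginal S {}"
    by (simp add: fun_eq_iff marginal_empty R_def c_def)
  then have "marginal (std_join Dom {} R Y S) Y = S"
    using icp R S \<open>finite Y\<close> by (simp add: inner_consistency_property_def inner_consistent_def)
  moreover have "marginal (std_join Dom {} R Y S) Y s = S s * c"
    using \<open>marginal R {} = marginal S {}\<close>
    by (simp add: marginal_std_join_right[OF R S] marginal_empty restrict_def c_def)
  ultimately show ?thesis
    by (simp add: c_def)
qed

lemma mult_add_absorb_if_inner_consistency_property:
  fixes p q :: "'k::{comm_semiring_0,comm_monoid_mult}"
  assumes icp: "inner_consistency_property TYPE('k) TYPE('at) TYPE('v::infinite)"
  shows "p * (p + q) = p"
proof -
  fix b :: 'at and v :: 'v
  obtain w :: 'v where "w \<noteq> v"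
    using arb_element[of "{v}"] by auto
  define tup where "tup x = restrict (\<lambda>_. x) {b}" for x :: 'v
  have "tup v \<noteq> tup w"
    using \<open>w \<noteq> v\<close> by (metis restrict_apply' singletonI tup_def)
  define S where "S r = (if r = tup v then p else if r = tup w then q else 0)" for r
  have supp: "{r. S r \<noteq> 0} \<subseteq> {tup v, tup w}"
    by (auto simp: S_def)
  moreover have "{tup v, tup w} \<subseteq> tuples (\<lambda>_. UNIV) {b}"
    by (simp add: tuples_def tup_def)
  ultimately have "krel (\<lambda>_. UNIV) {b} S"
    unfolding krel_def by (auto intro: finite_subset[OF supp])
  have "(\<Sum>r | S r \<noteq> 0. S r) = sum S {tup v, tup w}"
    using supp by (intro sum.mono_neutral_left) auto
  also have "\<dots> = p + q"
    using \<open>tup v \<noteq> tup w\<close> by (simp add: S_def)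
  finally have "S (tup v) * (p + q) = S (tup v)"
    using mult_total_if_inner_consistency_property[OF icp _ \<open>krel _ {b} S\<close>] by simp
  then show ?thesis
    by (simp add: S_def)
qed

theorem proposition19:
  "(add_absorptive TYPE('k::{comm_semiring_0,comm_monoid_mult}) \<and> mult_idempotent TYPE('k))
   \<longleftrightarrow> (add_positive TYPE('k) \<and>
        inner_consistency_property TYPE('k) TYPE('at::infinite) TYPE('v::infinite))"
proof -
  have "add_absorptive TYPE('k) \<and> mult_idempotent TYPE('k) \<longleftrightarrow> (\<forall>p q :: 'k. p * (p + q) = p)"
    by (rule absorptive_idempotent_iff_mult_add_absorb)
  also have "\<dots> \<longleftrightarrow> add_positive TYPE('k) \<and> inner_consistency_property TYPE('k) TYPE('at) TYPE('v)"
    using add_positive_if_mult_add_absorb inner_consistency_property_if_mult_add_absorb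
      mult_add_absorb_if_inner_consistency_property
    by blast
  finally show ?thesis .
qed

end
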